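(* Let $t\ge 1$, $n\ge 1$, $q\ge 1$ be integers and $u=\lfloor(\frac{t}{2}+1)^2\rfloor$. An $(n,q)$ code $\mathcal{C}$ is a $t$-MIPPC$(n,q)$ if and only if there is no minimal forbidden configuration in $\mathcal{C}$ of size at most $u$.
   Context: Let $Q$ be an alphabet with $|Q|=q$; an $(n,q)$ code is a subset $\mathcal{C}\subseteq Q^n$. For $\mathcal{S}\subseteq Q^n$ and $1\le i\le n$ let $\mathcal{S}(i)=\{\mathbf{c}(i):\mathbf{c}\in\mathcal{S}\}$ and $\mathrm{desc}(\mathcal{S})=\mathcal{S}(1)\times\cdots\times\mathcal{S}(n)$. $\mathcal{C}$ is a $t$-MIPPC$(n,q)$ if for every nonempty $\mathcal{C}'\subseteq\mathcal{C}$ with $|\mathcal{C}'|\le t$, $\bigcap_{\mathcal{S}\in S_t(\mathcal{C}')}\mathcal{S}\neq\emptyset$, where $S_t(\mathcal{C}')=\{\mathcal{S}\subseteq\mathcal{C}:|\mathcal{S}|\le t,\ \mathrm{desc}(\mathcal{S})=\mathrm{desc}(\mathcal{C}')\}$. A configuration in $\mathcal{C}$ is a collection $\mathcal{F}=\{\mathcal{F}_1,\dots,\mathcal{F}_m\}$ of nonempty subsets $\mathcal{F}_i\subseteq\mathcal{C}$ with $|\mathcal{F}_i|\le t$ and $\bigcap_i\mathcal{F}_i=\emptyset$; it is minimal if $\bigcap_{j\neq i}\mathcal{F}_j\neq\emptyset$ for all $i$; its size is $|\bigcup_i\mathcal{F}_i|$. A (minimal) forbidden configuration in $\mathcal{C}$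 is a (minimal) configuration with $\mathrm{desc}(\mathcal{F}_1)=\cdots=\mathrm{desc}(\mathcal{F}_m)$, i.e. $\mathcal{F}_1(i)=\cdots=\mathcal{F}_m(i)$ for every $1\le i\le n$. *)

theory Defs
  imports Main "HOL-Library.Multiset" Complex_Main
begin

definition words :: "'a set \<Rightarrow> nat \<Rightarrow> 'a list set" where
  "words Q n = {w. length w = n \<and> set w \<subseteq> Q}"

definition is_code :: "'a set \<Rightarrow> nat \<Rightarrow> nat \<Rightarrow> 'a list set \<Rightarrow> bool" where
  "is_code Q n q C \<longleftrightarrow> finite Q \<and> card Q = q \<and> C \<subseteq> words Q n"

(* S(i), 0-based coordinate i *)
definition coord :: "'a list set \<Rightarrow> nat \<Rightarrow> 'a set" where
  "coord S i = {c ! i | c. c \<in> S}"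

definition desc :: "nat \<Rightarrow> 'a list set \<Rightarrow> 'a list set" where
  "desc n S = {w. length w = n \<and> (\<forall>i<n. w ! i \<in> coord S i)}"

definition S_t :: "nat \<Rightarrow> nat \<Rightarrow> 'a list set \<Rightarrow> 'a list set \<Rightarrow> 'a list set set" where
  "S_t n t C C' = {S. S \<subseteq> C \<and> card S \<le> t \<and> desc n S = desc n C'}"

definition is_MIPPC :: "nat \<Rightarrow> nat \<Rightarrow> 'a list set \<Rightarrow> bool" where
  "is_MIPPC n t C \<longleftrightarrow>
     (\<forall>C'. C' \<subseteq> C \<and> C' \<noteq> {} \<and> card C' \<le> t \<longrightarrow> \<Inter> (S_t n t C C') \<noteq> {})"

definition configuration :: "nat \<Rightarrow> 'a list set \<Rightarrow> 'a list set set \<Rightarrow> bool" where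
  "configuration t C F \<longleftrightarrow> finite F \<and> F \<noteq> {} \<and>
     (\<forall>Fi\<in>F. Fi \<noteq> {} \<and> Fi \<subseteq> C \<and> card Fi \<le> t) \<and> \<Inter> F = {}"

definition minimal_configuration :: "nat \<Rightarrow> 'a list set \<Rightarrow> 'a list set set \<Rightarrow> bool" where
  "minimal_configuration t C F \<longleftrightarrow> configuration t C F \<and>
     (\<forall>Fi\<in>F. \<Inter> (F - {Fi}) \<noteq> {})"

definition config_size :: "'a list set set \<Rightarrow> nat" where
  "config_size F = card (\<Union> F)"

definition forbidden :: "nat \<Rightarrow> 'a list set set \<Rightarrow> bool" where
  "forbidden n F \<longleftrightarrow> (\<forall>Fi\<in>F. \<forall>Fj\<in>F. \<forall>i<n. coord Fi i = coord Fj i)"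

definition minimal_forbidden_configuration ::
    "nat \<Rightarrow> nat \<Rightarrow> 'a list set \<Rightarrow> 'a list set set \<Rightarrow> bool" where
  "minimal_forbidden_configuration n t C F \<longleftrightarrow> minimal_configuration t C F \<and> forbidden n F"

end

theory Submission
  imports Defs
begin

text \<open>
  A code fails to be a t-MIPPC exactly when some family of at most t codewords has a family
  of descendant-equivalent coalitions with empty intersection; such a family is a forbidden
  configuration, and any forbidden configuration witnesses the failure. Passing to an
  inclusion-minimal subfamily with empty intersection makes it minimal, and a minimal family
  F_1, ..., F_m of sets of size at most t with empty intersection is small: choosing
  x_i in all F_j except F_i gives m distinct points, each F_i contains m - 1 of them
  and at most t + 1 - m other points, so the union has at most
  m (t + 2 - m) \<le> (t/2 + 1)^2 elements.
\<close>

lemma mult_diff_le_floor_square: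
  fixes m t :: nat
  shows "m * (t + 2 - m) \<le> nat \<lfloor>(real t / 2 + 1) ^ 2\<rfloor>"
proof (cases "m \<le> t + 2")
  case True
  have "real (m * (t + 2 - m)) = real m * (real t + 2 - real m)"
    using True by (simp add: of_nat_diff)
  also have "\<dots> \<le> (real t / 2 + 1) ^ 2"
    using zero_le_power2[of "real t / 2 + 1 - real m"]
    by (simp add: power2_eq_square algebra_simps)
  finally show ?thesis
    by (simp add: le_nat_iff le_floor_iff)
qed simp

lemma minimal_Inter_empty_witnesses:
  assumes "\<Inter> G = {}" and "\<forall>F\<in>G. \<Inter> (G - {F}) \<noteq> {}"
  obtains x where "inj_on x G" and "\<And>F. F \<in> G \<Longrightarrow> x ` (G - {F}) \<subseteq> F"
proof -
  define x where "x F = (SOME y. y \<in> \<Inter> (G - {F}))" for F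
  have x_in: "x F \<in> \<Inter> (G - {F})" if "F \<in> G" for F
    using assms(2) that unfolding x_def by (meson ex_in_conv someI_ex)
  have x_notin: "x F \<notin> F" if "F \<in> G" for F
  proof
    assume "x F \<in> F"
    with x_in[OF that] have "x F \<in> \<Inter> G"
      by blast
    with assms(1) show False
      by simp
  qed
  have inj: "inj_on x G"
  proof (rule inj_onI, rule ccontr)
    fix F F' assume "F \<in> G" "F' \<in> G" "x F = x F'" "F \<noteq> F'"
    then have "x F' \<in> F"
      using x_in[OF \<open>F' \<in> G\<close>] by blast
    with \<open>x F = x F'\<close> x_notin[OF \<open>F \<in> G\<close>] show False
      by simp
  qed
  have x_image: "x ` (G - {F}) \<subseteq> F" if "F \<in> G" for F
    using x_in that by blast
  show ?thesis
    using inj x_image by (rule that)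
qed

lemma card_Union_le_if_minimal_Inter_empty:
  fixes G :: "'b set set"
  assumes fin: "finite G" and small: "\<forall>F\<in>G. finite F \<and> card F \<le> t"
    and empty: "\<Inter> G = {}" and minimal: "\<forall>F\<in>G. \<Inter> (G - {F}) \<noteq> {}"
  shows "card (\<Union> G) \<le> nat \<lfloor>(real t / 2 + 1) ^ 2\<rfloor>"
proof -
  obtain x where inj: "inj_on x G" and x_image: "\<And>F. F \<in> G \<Longrightarrow> x ` (G - {F}) \<subseteq> F"
    using minimal_Inter_empty_witnesses[OF empty minimal] by metis
  define X where "X = x ` G"
  define m where "m = card G"
  have card_X: "card X = m"
    unfolding X_def m_def by (rule card_image[OF inj])
  have outside: "m - 1 \<le> t \<and> card (F - X) \<le> t + 1 - m" if "F \<in> G" for F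
  proof -
    have "finite F" and "card F \<le> t"
      using small that by auto
    have "m - 1 = card (x ` (G - {F}))"
      using card_image[OF inj_on_subset[OF inj]] fin that by (simp add: m_def)
    also have "\<dots> \<le> card (F \<inter> X)"
      using x_image[OF that] \<open>finite F\<close> by (intro card_mono) (auto simp: X_def)
    finally have "m - 1 \<le> card (F \<inter> X)" .
    moreover have "card F = card (F \<inter> X) + card (F - X)"
      using \<open>finite F\<close> by (rule card_Int_Diff)
    ultimately show ?thesis
      using \<open>card F \<le> t\<close> by linarith
  qed
  obtain F where "F \<in> G"
    using empty by auto
  then have "m \<le> t + 1"
    using outside by fastforce
  have "t + 2 - m = Suc (t + 1 - m)"
    using \<open>m \<le> t + 1\<close> by arith
  have "\<Union> G \<subseteq> X \<union> (\<Union>F\<in>G. F - X)"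
    by blast
  then have "card (\<Union> G) \<le> card (X \<union> (\<Union>F\<in>G. F - X))"
    using fin small by (intro card_mono) (auto simp: X_def)
  also have "\<dots> \<le> card X + card (\<Union>F\<in>G. F - X)"
    by (rule card_Un_le)
  also have "\<dots> \<le> m + (\<Sum>F\<in>G. card (F - X))"
    using card_UN_le[OF fin, of "\<lambda>F. F - X"] card_X by linarith
  also have "\<dots> \<le> m + (\<Sum>F\<in>G. t + 1 - m)"
    using outside by (intro add_left_mono sum_mono) blast
  also have "\<dots> = m * (t + 2 - m)"
    using \<open>t + 2 - m = Suc (t + 1 - m)\<close> by (simp add: m_def)
  also have "\<dots> \<le> nat \<lfloor>(real t / 2 + 1) ^ 2\<rfloor>"
    by (rule mult_diff_le_floor_square)
  finally show ?thesis .
qed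

lemma minimal_subfamily_Inter_empty:
  assumes "finite S" and "\<Inter> S = {}"
  shows "\<exists>G\<subseteq>S. \<Inter> G = {} \<and> (\<forall>F\<in>G. \<Inter> (G - {F}) \<noteq> {})"
  using assms
proof (induction S rule: finite_psubset_induct)
  case (psubset S)
  show ?case
  proof (cases "\<forall>F\<in>S. \<Inter> (S - {F}) \<noteq> {}")
    case True
    with psubset.prems show ?thesis
      by blast
  next
    case False
    then obtain F where "F \<in> S" and "\<Inter> (S - {F}) = {}"
      by blast
    then have "S - {F} \<subset> S"
      by blast
    from psubset.IH[OF this \<open>\<Inter> (S - {F}) = {}\<close>] show ?thesis
      by (meson Diff_subset order_trans)
  qed
qed

lemma finite_words: "finite Q \<Longrightarrow> finite (words Q n)"
  using finite_lists_length_eq[of Q n] by (simp add: words_def conj_commute)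

lemma coord_eq_image_desc:
  assumes "\<forall>c\<in>S. length c = n" and "i < n"
  shows "coord S i = (\<lambda>w. w ! i) ` desc n S"
proof
  show "coord S i \<subseteq> (\<lambda>w. w ! i) ` desc n S"
  proof
    fix a assume "a \<in> coord S i"
    then obtain c where "c \<in> S" and "a = c ! i"
      by (auto simp: coord_def)
    moreover from \<open>c \<in> S\<close> assms(1) have "c \<in> desc n S"
      by (auto simp: desc_def coord_def)
    ultimately show "a \<in> (\<lambda>w. w ! i) ` desc n S"
      by blast
  qed
  show "(\<lambda>w. w ! i) ` desc n S \<subseteq> coord S i"
    using assms(2) by (auto simp: desc_def)
qed

lemma desc_eq_empty_iff:
  assumes "n \<ge> 1" and "\<forall>c\<in>S. length c = n"
  shows "desc n S = {} \<longleftrightarrow> S = {}"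
proof
  assume "S = {}"
  with assms(1) show "desc n S = {}"
    by (auto simp: desc_def coord_def intro!: exI[of _ 0])
next
  assume "desc n S = {}"
  moreover have "c \<in> desc n S" if "c \<in> S" for c
    using that assms(2) by (auto simp: desc_def coord_def)
  ultimately show "S = {}"
    by blast
qed

lemma forbidden_configuration_not_MIPPC:
  assumes conf: "configuration t C F" and forb: "forbidden n F"
  shows "\<not> is_MIPPC n t C"
proof
  assume mippc: "is_MIPPC n t C"
  have "F \<noteq> {}" and "\<Inter> F = {}"
    and member: "\<forall>F\<^sub>i\<in>F. F\<^sub>i \<noteq> {} \<and> F\<^sub>i \<subseteq> C \<and> card F\<^sub>i \<le> t"
    using conf by (simp_all add: configuration_def)
  obtain F\<^sub>1 where "F\<^sub>1 \<in> F"
    using \<open>F \<noteq> {}\<close> by blast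
  then have "F\<^sub>1 \<subseteq> C" "F\<^sub>1 \<noteq> {}" "card F\<^sub>1 \<le> t"
    using member by simp_all
  have "F \<subseteq> S_t n t C F\<^sub>1"
  proof
    fix F\<^sub>i assume "F\<^sub>i \<in> F"
    with \<open>F\<^sub>1 \<in> F\<close> forb have "\<forall>i<n. coord F\<^sub>i i = coord F\<^sub>1 i"
      unfolding forbidden_def by blast
    then have "desc n F\<^sub>i = desc n F\<^sub>1"
      by (simp add: desc_def)
    with member \<open>F\<^sub>i \<in> F\<close> show "F\<^sub>i \<in> S_t n t C F\<^sub>1"
      by (simp add: S_t_def)
  qed
  then have "\<Inter> (S_t n t C F\<^sub>1) = {}"
    using \<open>\<Inter> F = {}\<close> by blast
  with mippc \<open>F\<^sub>1 \<subseteq> C\<close> \<open>F\<^sub>1 \<noteq> {}\<close> \<open>card F\<^sub>1 \<le> t\<close> show False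
    unfolding is_MIPPC_def by blast
qed

lemma not_MIPPC_imp_small_minimal_forbidden_configuration:
  assumes fin: "finite C" and len: "\<forall>c\<in>C. length c = n" and "n \<ge> 1"
    and "\<not> is_MIPPC n t C"
  shows "\<exists>F. minimal_forbidden_configuration n t C F \<and>
    config_size F \<le> nat \<lfloor>(real t / 2 + 1) ^ 2\<rfloor>"
proof -
  obtain C' where "C' \<subseteq> C" "C' \<noteq> {}" and empty: "\<Inter> (S_t n t C C') = {}"
    using assms(4) unfolding is_MIPPC_def by blast
  have "S_t n t C C' \<subseteq> Pow C"
    by (auto simp: S_t_def)
  then have "finite (S_t n t C C')"
    using fin by (meson finite_Pow_iff finite_subset)
  then obtain G where G: "G \<subseteq> S_t n t C C'" and "\<Inter> G = {}"
    and minimal: "\<forall>F\<in>G. \<Inter> (G - {F}) \<noteq> {}"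
    using minimal_subfamily_Inter_empty[OF _ empty] by blast
  have "finite G"
    using G \<open>finite (S_t n t C C')\<close> by (rule finite_subset)
  have "desc n C' \<noteq> {}"
    using desc_eq_empty_iff[OF \<open>n \<ge> 1\<close>] \<open>C' \<subseteq> C\<close> \<open>C' \<noteq> {}\<close> len by blast
  have member: "F\<^sub>i \<subseteq> C" "card F\<^sub>i \<le> t" "desc n F\<^sub>i = desc n C'"
    "\<forall>c\<in>F\<^sub>i. length c = n" if "F\<^sub>i \<in> G" for F\<^sub>i
    using G that len by (auto simp: S_t_def)
  have "F\<^sub>i \<noteq> {}" if "F\<^sub>i \<in> G" for F\<^sub>i
    using member[OF that] desc_eq_empty_iff[OF \<open>n \<ge> 1\<close>] \<open>desc n C' \<noteq> {}\<close> by metis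
  then have "minimal_configuration t C G"
    using \<open>finite G\<close> \<open>\<Inter> G = {}\<close> minimal member
    unfolding minimal_configuration_def configuration_def by blast
  moreover have "forbidden n G"
    unfolding forbidden_def
  proof (intro ballI allI impI)
    fix F\<^sub>i F\<^sub>j i assume "F\<^sub>i \<in> G" "F\<^sub>j \<in> G" "i < n"
    then show "coord F\<^sub>i i = coord F\<^sub>j i"
      using member coord_eq_image_desc by metis
  qed
  moreover have "\<forall>F\<^sub>i\<in>G. finite F\<^sub>i \<and> card F\<^sub>i \<le> t"
    using member(1,2) fin finite_subset by metis
  then have "config_size G \<le> nat \<lfloor>(real t / 2 + 1) ^ 2\<rfloor>"
    unfolding config_size_def
    using \<open>finite G\<close> \<open>\<Inter> G = {}\<close> minimal by (intro card_Union_le_if_minimal_Inter_empty)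
  ultimately show ?thesis
    by (auto simp: minimal_forbidden_configuration_def)
qed

theorem corollary4:
  fixes Q :: "'a set" and C :: "'a list set" and t n q u :: nat
  assumes "t \<ge> 1" and "n \<ge> 1" and "q \<ge> 1"
    and "u = nat \<lfloor>(real t / 2 + 1) ^ 2\<rfloor>"
    and "is_code Q n q C"
  shows "is_MIPPC n t C \<longleftrightarrow>
    \<not> (\<exists>F. minimal_forbidden_configuration n t C F \<and> config_size F \<le> u)"
proof -
  have "C \<subseteq> words Q n" and "finite Q"
    using assms(5) by (auto simp: is_code_def)
  then have "finite C" and "\<forall>c\<in>C. length c = n"
    using finite_subset[OF _ finite_words] by (auto simp: words_def)
  show ?thesis
    using forbidden_configuration_not_MIPPC
      not_MIPPC_imp_small_minimal_forbidden_configuration[OF \<open>finite C\<close> _ assms(2)]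
      \<open>\<forall>c\<in>C. length c = n\<close>
    unfolding assms(4) minimal_forbidden_configuration_def minimal_configuration_def
    by blast
qed

end
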